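(* Let $\Omega\subseteq\mathbb{R}^2$ be open, let $P\subset\Omega$ be a compact polygon, and let $s:\Omega\to\mathbb{R}^n$ be a smooth surface. Consider finite partitions $\Pi$ of $P$ into non-overlapping nondegenerate oriented triangles $[a_i,b_i,c_i]$, each balanced in $\Omega$, where the vertices are labelled so that $a_i'$, the mirror vertex of $a_i$ (the reflection of $a_i$ across the line through $b_i$ and $c_i$), is a balanced mirror vertex with the triangle $a_i',b_i,c_i$ contained in $\Omega$. Let $\|\Pi\|$ be the maximal side length of the triangles in $\Pi$. Then $$\lim_{\|\Pi\|\to 0}\ \frac14\sum_{[a_i,b_i,c_i]\in\Pi}\Big|\big[s(a_i')-s(a_i)\big]\wedge\big[s(c_i)-s(b_i)\big]\Big| \;=\; \int_P\big|\partial_1 s(x)\wedge\partial_2 s(x)\big|\,dx,$$ i.e. for every $\varepsilon>0$ there is $\delta>0$ such that for every such partition $\Pi$ with $\|\Pi\|<\delta$ the sum differs from the integral by less than $\varepsilon$.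
   Context: Two sets are non-overlapping if their interiors are disjoint; the partition need not be a triangulation. $\wedge$ is the exterior product and $|\cdot|$ is the Euclidean norm on $\Lambda^2\mathbb{R}^n$ for which $\{h_j\wedge h_k\}_{j<k}$ is orthonormal when $\{h_j\}$ is an orthonormal basis of $\mathbb{R}^n$. $\partial_i s(x)=\sum_j\partial_{\ell_i}\sigma_j(x)h_j$ for an orthonormal basis $\{\ell_1,\ell_2\}$ of $\mathbb{R}^2$ and $\sigma_j=s\cdot h_j$. A real function on $\Omega$ is smooth if it is $C^2$ and the eigenvalues of its Hessian are bounded in absolute value uniformly on $\Omega$; $s$ is a smooth surface if all components $\sigma_j$ are smooth. For a nondegenerate triangle with vertices $x,x_+,x_-$, the mirror vertex of $x$ is its reflection $x'$ across the line through $x_+,x_-$; it is balanced if $\frac12(x+x')$ lies in the segment $[x_+,x_-]$. A triangle $\Delta$ is balanced in $\Omega$ if $\Delta\subset\Omega$ and for some vertex $x$ of $\Delta$ the mirror vertex $x'$ is balanced and the triangle with vertices $x',x_+,x_-$ is contained in $\Omega$. *)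

theory Defs
  imports "HOL-Analysis.Analysis"
begin

fun polypath :: "(real^2) list \<Rightarrow> real \<Rightarrow> real^2" where
  "polypath [] = linepath 0 0"
| "polypath [a] = linepath a a"
| "polypath [a, b] = linepath a b"
| "polypath (a # b # c # rest) = linepath a b +++ polypath (b # c # rest)"

definition compact_polygon :: "(real^2) set \<Rightarrow> bool" where
  "compact_polygon P \<longleftrightarrow>
     (\<exists>vs. length vs \<ge> 4 \<and> hd vs = last vs \<and>
        simple_path (polypath vs) \<and> pathfinish (polypath vs) = pathstart (polypath vs) \<and>
        P = path_image (polypath vs) \<union> inside (path_image (polypath vs)))"

definition triangle :: "real^2 \<Rightarrow> real^2 \<Rightarrow> real^2 \<Rightarrow> (real^2) set" where
  "triangle x y z = convex hull {x, y, z}"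

definition nondegenerate :: "real^2 \<Rightarrow> real^2 \<Rightarrow> real^2 \<Rightarrow> bool" where
  "nondegenerate x y z \<longleftrightarrow> \<not> collinear {x, y, z}"

definition foot :: "real^2 \<Rightarrow> real^2 \<Rightarrow> real^2 \<Rightarrow> real^2" where
  "foot x y z = y + (((x - y) \<bullet> (z - y)) / (norm (z - y))\<^sup>2) *\<^sub>R (z - y)"

definition mirror :: "real^2 \<Rightarrow> real^2 \<Rightarrow> real^2 \<Rightarrow> real^2" where
  "mirror x y z = 2 *\<^sub>R foot x y z - x"

definition balanced_mirror :: "real^2 \<Rightarrow> real^2 \<Rightarrow> real^2 \<Rightarrow> bool" where
  "balanced_mirror x y z \<longleftrightarrow> (1/2) *\<^sub>R (x + mirror x y z) \<in> closed_segment y z"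

definition balanced_at_a :: "(real^2) set \<Rightarrow> real^2 \<Rightarrow> real^2 \<Rightarrow> real^2 \<Rightarrow> bool" where
  "balanced_at_a \<Omega> a b c \<longleftrightarrow>
     triangle a b c \<subseteq> \<Omega> \<and> balanced_mirror a b c \<and> triangle (mirror a b c) b c \<subseteq> \<Omega>"

definition tri :: "(real^2) \<times> (real^2) \<times> (real^2) \<Rightarrow> (real^2) set" where
  "tri t = (case t of (a, b, c) \<Rightarrow> triangle a b c)"

definition admissible_partition ::
  "(real^2) set \<Rightarrow> (real^2) set \<Rightarrow> ((real^2) \<times> (real^2) \<times> (real^2)) set \<Rightarrow> bool" where
  "admissible_partition \<Omega> P Pt \<longleftrightarrow>
     finite Pt \<and>
     \<Union>(tri ` Pt) = P \<and>
     (\<forall>(a, b, c)\<in>Pt. nondegenerate a b c \<and> balanced_at_a \<Omega> a b c) \<and>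
     (\<forall>t1\<in>Pt. \<forall>t2\<in>Pt. t1 \<noteq> t2 \<longrightarrow> interior (tri t1) \<inter> interior (tri t2) = {})"

definition mesh :: "((real^2) \<times> (real^2) \<times> (real^2)) set \<Rightarrow> real" where
  "mesh Pt = Max (insert 0 ((\<lambda>(a,b,c). max (dist a b) (max (dist b c) (dist c a))) ` Pt))"

text \<open>|u \<and> v| in \<Lambda>^2 R^n, with {h_j \<and> h_k}_{j<k} orthonormal for the standard basis:
  the sum over unordered pairs j<k equals half the sum over all ordered pairs.\<close>
definition wedge_norm :: "real^'n \<Rightarrow> real^'n \<Rightarrow> real" where
  "wedge_norm u v = sqrt ((1/2) * (\<Sum>j\<in>UNIV. \<Sum>k\<in>UNIV. (u$j * v$k - u$k * v$j)\<^sup>2))"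

definition is_eigenvalue :: "real^2^2 \<Rightarrow> real \<Rightarrow> bool" where
  "is_eigenvalue A lam \<longleftrightarrow> (\<exists>v. v \<noteq> 0 \<and> A *v v = lam *\<^sub>R v)"

definition smooth_fun :: "(real^2) set \<Rightarrow> (real^2 \<Rightarrow> real) \<Rightarrow> bool" where
  "smooth_fun \<Omega> f \<longleftrightarrow>
     (\<exists>g H. (\<forall>x\<in>\<Omega>. (f has_derivative (\<lambda>h. g x \<bullet> h)) (at x) \<and>
                    (g has_derivative (\<lambda>h. H x *v h)) (at x)) \<and>
            continuous_on \<Omega> H \<and>
            (\<exists>M. \<forall>x\<in>\<Omega>. \<forall>lam. is_eigenvalue (H x) lam \<longrightarrow> \<bar>lam\<bar> \<le> M))"

definition smooth_surface :: "(real^2) set \<Rightarrow> (real^2 \<Rightarrow> real^'n) \<Rightarrow> bool" where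
  "smooth_surface \<Omega> s \<longleftrightarrow> (\<forall>j. smooth_fun \<Omega> (\<lambda>x. s x $ j))"

definition partial_dir :: "(real^2 \<Rightarrow> real^'n) \<Rightarrow> real^2 \<Rightarrow> real^2 \<Rightarrow> real^'n" where
  "partial_dir s l x = (\<chi> j. frechet_derivative (\<lambda>y. s y $ j) (at x) l)"

end

theory Submission
  imports Defs
begin

text \<open>Let \<open>m\<close> be the foot of the altitude from \<open>a\<close> in a balanced triangle \<open>[a,b,c]\<close>. Then \<open>m\<close>
  lies on \<open>[b,c]\<close> and is the midpoint of \<open>[a,a']\<close>, so both chords \<open>[a,a']\<close> and \<open>[b,c]\<close> stay
  within the diameter of the triangle from \<open>m\<close>. Linearising \<open>s\<close> at \<open>m\<close> gives
  \<open>s(a') - s(a) \<approx> Ds(m)(a' - a)\<close> and \<open>s(c) - s(b) \<approx> Ds(m)(c - b)\<close>, and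
  \<open>|Ds(m)u \<and> Ds(m)v| = |det(u,v)| |\<partial>\<^sub>1s \<and> \<partial>\<^sub>2s|(m)\<close>. As \<open>a' - a \<perp> c - b\<close>,
  \<open>|det(a' - a, c - b)| = |a' - a| |c - b|\<close> is four times the area of the triangle. Hence each
  quarter-term approximates the integral over its triangle up to \<open>o(area)\<close>, uniformly by
  uniform continuity of \<open>Ds\<close> on a compact neighbourhood of \<open>P\<close>; summing over the partition
  gives the claim.\<close>

section \<open>Planar determinants and the norm of a wedge product\<close>

definition det2 :: "real^2 \<Rightarrow> real^2 \<Rightarrow> real" where
  "det2 u v = u$1 * v$2 - u$2 * v$1"

lemma inner_real2: "(u::real^2) \<bullet> v = u$1 * v$1 + u$2 * v$2"
  by (simp add: inner_vec_def sum_2)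

lemma det2_squared: "(det2 u v)\<^sup>2 = (norm u)\<^sup>2 * (norm v)\<^sup>2 - (u \<bullet> v)\<^sup>2"
  unfolding power2_norm_eq_inner inner_real2 det2_def by (simp add: algebra_simps power2_eq_square)

lemma abs_det2_orthogonal:
  assumes "u \<bullet> v = 0"
  shows "\<bar>det2 u v\<bar> = norm u * norm v"
proof -
  have "\<bar>det2 u v\<bar>\<^sup>2 = (norm u * norm v)\<^sup>2"
    using assms by (simp add: det2_squared power_mult_distrib)
  then show ?thesis
    by (rule power2_eq_imp_eq) auto
qed

text \<open>The coordinates of \<open>u \<and> v\<close> indexed by ordered pairs, so that every unordered pair
  \<open>j < k\<close> is counted twice; hence the factor \<open>sqrt 2\<close> below.\<close>
definition wedge :: "real^'n \<Rightarrow> real^'n \<Rightarrow> real^('n \<times> 'n)" where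
  "wedge u v = (\<chi> p. u$(fst p) * v$(snd p) - u$(snd p) * v$(fst p))"

lemma sum_UNIV_prod: "(\<Sum>p\<in>UNIV. f p :: real) = (\<Sum>j\<in>UNIV. \<Sum>k\<in>UNIV. f (j, k))"
  by (simp flip: UNIV_Times_UNIV add: sum.cartesian_product)

lemma wedge_norm_eq_norm_wedge: "wedge_norm u v = norm (wedge u v) / sqrt 2"
proof -
  have "(norm (wedge u v))\<^sup>2 = (\<Sum>j\<in>UNIV. \<Sum>k\<in>UNIV. (u$j * v$k - u$k * v$j)\<^sup>2)"
    unfolding power2_norm_eq_inner inner_vec_def wedge_def
    by (subst sum_UNIV_prod) (simp add: power2_eq_square)
  then have "norm (wedge u v) = sqrt (\<Sum>j\<in>UNIV. \<Sum>k\<in>UNIV. (u$j * v$k - u$k * v$j)\<^sup>2)"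
    by (metis norm_ge_zero real_sqrt_unique)
  then show ?thesis
    unfolding wedge_norm_def by (simp add: real_sqrt_mult real_sqrt_divide)
qed

lemma norm_outer_product:
  "norm (\<chi> p. (u::real^'n)$(fst p) * (v::real^'n)$(snd p)) = norm u * norm v"
proof -
  have "(norm (\<chi> p. u$(fst p) * v$(snd p)))\<^sup>2 = (\<Sum>j\<in>UNIV. \<Sum>k\<in>UNIV. (u$j * u$j) * (v$k * v$k))"
    unfolding power2_norm_eq_inner inner_vec_def
    by (subst sum_UNIV_prod) (simp add: algebra_simps)
  also have "\<dots> = (norm u * norm v)\<^sup>2"
    by (simp add: sum_product[symmetric] power_mult_distrib power2_norm_eq_inner inner_vec_def)
  finally show ?thesis
    by (rule power2_eq_imp_eq) auto
qed

lemma norm_wedge_le: "norm (wedge u v) \<le> 2 * norm u * norm v"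
proof -
  have "wedge u v = (\<chi> p. u$(fst p) * v$(snd p)) - (\<chi> p. v$(fst p) * u$(snd p))"
    unfolding wedge_def by (simp add: vec_eq_iff mult.commute)
  then have "norm (wedge u v) \<le> norm (\<chi> p. u$(fst p) * v$(snd p)) + norm (\<chi> p. v$(fst p) * u$(snd p))"
    by (simp only: norm_triangle_ineq4)
  then show ?thesis
    by (simp add: norm_outer_product)
qed

lemma wedge_diff: "wedge a b - wedge c d = wedge (a - c) b + wedge c (b - d)"
  unfolding wedge_def by (simp add: vec_eq_iff algebra_simps)

lemma abs_wedge_norm_diff_le:
  "\<bar>wedge_norm a b - wedge_norm c d\<bar> \<le> 2 * norm (a - c) * norm b + 2 * norm c * norm (b - d)"
proof -
  have "\<bar>wedge_norm a b - wedge_norm c d\<bar> = \<bar>norm (wedge a b) - norm (wedge c d)\<bar> / sqrt 2"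
    by (simp add: wedge_norm_eq_norm_wedge flip: diff_divide_distrib)
  also have "\<dots> \<le> \<bar>norm (wedge a b) - norm (wedge c d)\<bar>"
    using divide_left_mono[of 1 "sqrt 2" "\<bar>norm (wedge a b) - norm (wedge c d)\<bar>"] by simp
  also have "\<dots> \<le> norm (wedge a b - wedge c d)"
    by (rule norm_triangle_ineq3)
  also have "\<dots> \<le> norm (wedge (a - c) b) + norm (wedge c (b - d))"
    unfolding wedge_diff by (rule norm_triangle_ineq)
  also have "\<dots> \<le> 2 * norm (a - c) * norm b + 2 * norm c * norm (b - d)"
    by (intro add_mono norm_wedge_le)
  finally show ?thesis .
qed

lemma wedge_norm_linear_image:
  fixes p :: "'n::finite \<Rightarrow> real^2"
  shows "wedge_norm (\<chi> j. p j \<bullet> u) (\<chi> j. p j \<bullet> v)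
           = \<bar>det2 u v\<bar> * wedge_norm (\<chi> j. p j $ 1) (\<chi> j. p j $ 2)"
proof -
  have "((p j \<bullet> u) * (p k \<bullet> v) - (p k \<bullet> u) * (p j \<bullet> v))\<^sup>2
          = (det2 u v)\<^sup>2 * (p j $ 1 * p k $ 2 - p k $ 1 * p j $ 2)\<^sup>2" for j k
    unfolding inner_real2 det2_def by (simp add: algebra_simps power2_eq_square)
  then have "(\<Sum>j\<in>UNIV. \<Sum>k\<in>UNIV. ((p j \<bullet> u) * (p k \<bullet> v) - (p k \<bullet> u) * (p j \<bullet> v))\<^sup>2)
     = (det2 u v)\<^sup>2 * (\<Sum>j\<in>UNIV. \<Sum>k\<in>UNIV. (p j $ 1 * p k $ 2 - p k $ 1 * p j $ 2)\<^sup>2)"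
    by (simp only: sum_distrib_left)
  then show ?thesis
    unfolding wedge_norm_def
    by (simp only: vec_lambda_beta times_divide_eq_right[symmetric] real_sqrt_mult real_sqrt_abs)
       (simp add: ac_simps)
qed

section \<open>Geometry of the mirror vertex\<close>

lemma mirror_minus: "mirror a b c - a = 2 *\<^sub>R (foot a b c - a)"
  unfolding mirror_def by (simp add: algebra_simps scaleR_2)

lemma dist_foot_mirror: "dist (foot a b c) (mirror a b c) = dist (foot a b c) a"
  unfolding mirror_def dist_norm by (simp add: algebra_simps scaleR_2 norm_minus_commute)

lemma foot_minus: "foot a b c - a = (b - a) + (((a - b) \<bullet> (c - b)) / (norm (c - b))\<^sup>2) *\<^sub>R (c - b)"
  unfolding foot_def by (simp add: algebra_simps)

lemma inner_foot_minus_side: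
  assumes "b \<noteq> c"
  shows "(foot a b c - a) \<bullet> (c - b) = 0"
proof -
  define t where "t = ((a - b) \<bullet> (c - b)) / (norm (c - b))\<^sup>2"
  have "t * ((c - b) \<bullet> (c - b)) = (a - b) \<bullet> (c - b)"
    using assms by (simp add: t_def power2_norm_eq_inner)
  then show ?thesis
    unfolding foot_minus t_def[symmetric] by (simp add: inner_add_left inner_diff_left)
qed

lemma det2_foot_minus_side: "det2 (foot a b c - a) (c - b) = det2 (b - a) (c - a)"
proof -
  have "det2 ((b - a) + t *\<^sub>R (c - b)) (c - b) = det2 (b - a) (c - a)" for t
    by (simp add: det2_def algebra_simps)
  then show ?thesis
    unfolding foot_minus .
qed

lemma det2_scaleR_left: "det2 (r *\<^sub>R u) v = r * det2 u v"
  by (simp add: det2_def algebra_simps)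

lemma measure_triangle: "measure lebesgue (triangle a b c) = \<bar>det2 (b - a) (c - a)\<bar> / 2"
proof -
  have "compact (triangle a b c)"
    unfolding triangle_def by (intro finite_imp_compact_convex_hull) auto
  then have "measure lebesgue (triangle a b c) = measure lborel (triangle a b c)"
    by (intro measure_completion) (auto dest: compact_imp_closed)
  also have "\<dots> = \<bar>det2 (b - a) (c - a)\<bar> / 2"
    unfolding triangle_def content_triangle det2_def by (simp add: abs_minus_commute algebra_simps)
  finally show ?thesis .
qed

lemma abs_det2_mirror_side:
  "\<bar>det2 (mirror a b c - a) (c - b)\<bar> = 4 * measure lebesgue (triangle a b c)"
  unfolding mirror_minus det2_scaleR_left det2_foot_minus_side measure_triangle by (simp add: abs_mult)

lemma norm_mirror_mult_norm_side:
  assumes "b \<noteq> c"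
  shows "norm (mirror a b c - a) * norm (c - b) = 4 * measure lebesgue (triangle a b c)"
proof -
  have "(mirror a b c - a) \<bullet> (c - b) = 0"
    using inner_foot_minus_side[OF assms] by (simp add: mirror_minus)
  then show ?thesis
    by (simp flip: abs_det2_orthogonal add: abs_det2_mirror_side)
qed

lemma foot_in_closed_segment: "balanced_mirror a b c \<Longrightarrow> foot a b c \<in> closed_segment b c"
  unfolding balanced_mirror_def mirror_def by (simp add: algebra_simps scaleR_2)

lemma closed_segment_subset_triangle: "closed_segment b c \<subseteq> triangle a b c"
  unfolding triangle_def segment_convex_hull by (rule hull_mono) auto

lemma dist_in_triangle_lt:
  assumes "max (dist a b) (max (dist b c) (dist c a)) < \<delta>"
    and "x \<in> triangle a b c" "y \<in> triangle a b c"
  shows "dist x y < \<delta>"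
proof -
  obtain u v where "u \<in> {a, b, c}" "v \<in> {a, b, c}"
    and extremal: "\<forall>x\<in>convex hull {a, b, c}. \<forall>y\<in>convex hull {a, b, c}. norm (x - y) \<le> norm (u - v)"
    using simplex_extremal_le[of "{a, b, c}"] by blast
  have "0 < \<delta>"
    using assms(1) zero_le_dist[of a b] by linarith
  then have "norm (u - v) < \<delta>"
    using \<open>u \<in> {a, b, c}\<close> \<open>v \<in> {a, b, c}\<close> assms(1) by (auto simp: dist_norm norm_minus_commute)
  moreover have "norm (x - y) \<le> norm (u - v)"
    using extremal assms(2,3) by (simp add: triangle_def)
  ultimately show ?thesis
    by (simp add: dist_norm)
qed

text \<open>The foot \<open>m\<close> is the midpoint of \<open>[a, a']\<close>, so the whole chord \<open>[a, a']\<close> is as close to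
  \<open>m\<close> as \<open>a\<close> is.\<close>
lemma balanced_triangle_near_foot:
  assumes "balanced_mirror a b c" and "max (dist a b) (max (dist b c) (dist c a)) < \<delta>"
    and "x \<in> triangle a b c \<union> closed_segment a (mirror a b c)"
  shows "dist x (foot a b c) < \<delta>"
proof -
  have foot: "foot a b c \<in> triangle a b c"
    using foot_in_closed_segment[OF assms(1)] closed_segment_subset_triangle by blast
  have "dist (foot a b c) a < \<delta>"
    using dist_in_triangle_lt[OF assms(2) foot] by (simp add: triangle_def hull_inc)
  moreover have "dist (foot a b c) x \<le> dist (foot a b c) a" if "x \<in> closed_segment a (mirror a b c)"
    using dist_decreases_closed_segment[OF that, of "foot a b c"] by (auto simp: dist_foot_mirror)
  ultimately show ?thesis
    using assms(3) dist_in_triangle_lt[OF assms(2) _ foot] by (auto simp: dist_commute)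
qed

section \<open>Linearisation of the mirror term\<close>

lemma mvt_linear_error:
  fixes f :: "'a::{real_inner, perfect_space} \<Rightarrow> real"
  assumes "\<And>x. x \<in> closed_segment p q \<Longrightarrow> (f has_derivative (\<lambda>h. g x \<bullet> h)) (at x)"
    and "\<And>x. x \<in> closed_segment p q \<Longrightarrow> norm (g x - w) \<le> \<eta>"
  shows "\<bar>f q - f p - w \<bullet> (q - p)\<bar> \<le> \<eta> * norm (q - p)"
proof -
  have "norm ((\<lambda>x. f x - w \<bullet> x) q - (\<lambda>x. f x - w \<bullet> x) p) \<le> \<eta> * norm (q - p)"
  proof (rule differentiable_bound[where f' = "\<lambda>x h. (g x - w) \<bullet> h" and S = "closed_segment p q"])
    fix x assume x: "x \<in> closed_segment p q"
    have "((\<lambda>x. f x - w \<bullet> x) has_derivative (\<lambda>h. g x \<bullet> h - w \<bullet> h)) (at x)"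
      by (intro derivative_intros assms(1)[OF x])
    then show "((\<lambda>x. f x - w \<bullet> x) has_derivative (\<lambda>h. (g x - w) \<bullet> h)) (at x within closed_segment p q)"
      by (simp add: inner_diff_left has_derivative_at_withinI)
    show "onorm (\<lambda>h. (g x - w) \<bullet> h) \<le> \<eta>"
    proof (rule onorm_le)
      fix h
      have "norm ((g x - w) \<bullet> h) \<le> norm (g x - w) * norm h"
        by (simp add: Cauchy_Schwarz_ineq2)
      also have "\<dots> \<le> \<eta> * norm h"
        by (intro mult_right_mono assms(2)[OF x]) auto
      finally show "norm ((g x - w) \<bullet> h) \<le> \<eta> * norm h" .
    qed
  qed auto
  then show ?thesis
    by (simp add: inner_diff_right algebra_simps)
qed

lemma vector_mvt_linear_error:
  fixes s :: "'a::{real_inner, perfect_space} \<Rightarrow> real^'n" and g :: "'n \<Rightarrow> 'a \<Rightarrow> 'a"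
  assumes "\<And>j x. x \<in> closed_segment p q \<Longrightarrow> ((\<lambda>y. s y $ j) has_derivative (\<lambda>h. g j x \<bullet> h)) (at x)"
    and "\<And>j x. x \<in> closed_segment p q \<Longrightarrow> norm (g j x - g j m) \<le> \<eta>"
  shows "norm (s q - s p - (\<chi> j. g j m \<bullet> (q - p))) \<le> real CARD('n) * \<eta> * norm (q - p)"
proof -
  have "norm (s q - s p - (\<chi> j. g j m \<bullet> (q - p)))
          \<le> (\<Sum>j\<in>UNIV. \<bar>s q $ j - s p $ j - g j m \<bullet> (q - p)\<bar>)"
    using norm_le_l1_cart[of "s q - s p - (\<chi> j. g j m \<bullet> (q - p))"] by simp
  also have "\<dots> \<le> (\<Sum>j\<in>(UNIV::'n set). \<eta> * norm (q - p))"
  proof (rule sum_mono)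
    fix j
    show "\<bar>s q $ j - s p $ j - g j m \<bullet> (q - p)\<bar> \<le> \<eta> * norm (q - p)"
      by (rule mvt_linear_error[where g = "g j"]) (use assms in auto)
  qed
  finally show ?thesis
    by simp
qed

lemma norm_gradient_apply_le:
  fixes G :: "'n::finite \<Rightarrow> 'a::real_inner"
  assumes "\<And>j. norm (G j) \<le> B"
  shows "norm (\<chi> j. G j \<bullet> u) \<le> real CARD('n) * B * norm u"
proof -
  have "norm (\<chi> j. G j \<bullet> u) \<le> (\<Sum>j\<in>UNIV. \<bar>G j \<bullet> u\<bar>)"
    using norm_le_l1_cart[of "\<chi> j. G j \<bullet> u"] by simp
  also have "\<dots> \<le> (\<Sum>j\<in>(UNIV::'n set). B * norm u)"
  proof (rule sum_mono)
    fix j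
    have "\<bar>G j \<bullet> u\<bar> \<le> norm (G j) * norm u"
      by (rule Cauchy_Schwarz_ineq2)
    also have "\<dots> \<le> B * norm u"
      by (intro mult_right_mono assms) auto
    finally show "\<bar>G j \<bullet> u\<bar> \<le> B * norm u" .
  qed
  finally show ?thesis
    by simp
qed

text \<open>Here \<open>g j x\<close> is the gradient of the \<open>j\<close>-th component of the surface at \<open>x\<close>.\<close>
definition area_density :: "('n::finite \<Rightarrow> real^2 \<Rightarrow> real^2) \<Rightarrow> real^2 \<Rightarrow> real" where
  "area_density g x = wedge_norm (\<chi> j. g j x $ 1) (\<chi> j. g j x $ 2)"

lemma continuous_on_area_density:
  "(\<And>j. continuous_on S (g j)) \<Longrightarrow> continuous_on S (area_density g)"
  unfolding area_density_def wedge_norm_def by (intro continuous_intros)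

lemma quarter_wedge_mirror_linearization:
  fixes s :: "real^2 \<Rightarrow> real^'n" and g :: "'n \<Rightarrow> real^2 \<Rightarrow> real^2"
  assumes "b \<noteq> c"
    and der: "\<And>j x. x \<in> closed_segment a (mirror a b c) \<union> closed_segment b c \<Longrightarrow>
                ((\<lambda>y. s y $ j) has_derivative (\<lambda>h. g j x \<bullet> h)) (at x)"
    and near: "\<And>j x. x \<in> closed_segment a (mirror a b c) \<union> closed_segment b c \<Longrightarrow>
                norm (g j x - g j (foot a b c)) \<le> \<eta>"
    and bound: "\<And>j. norm (g j (foot a b c)) \<le> B"
    and "0 \<le> \<eta>"
  shows "\<bar>(1/4) * wedge_norm (s (mirror a b c) - s a) (s c - s b)
            - measure lebesgue (triangle a b c) * area_density g (foot a b c)\<bar>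
         \<le> 2 * (real CARD('n))\<^sup>2 * (2 * B + \<eta>) * \<eta> * measure lebesgue (triangle a b c)"
proof -
  define a' m C \<mu> where "a' = mirror a b c" and "m = foot a b c" and "C = real CARD('n)"
    and "\<mu> = measure lebesgue (triangle a b c)"
  define A A' V V' where "A = s a' - s a" and "A' = (\<chi> j. g j m \<bullet> (a' - a))"
    and "V = s c - s b" and "V' = (\<chi> j. g j m \<bullet> (c - b))"
  have "0 \<le> B"
    by (meson bound norm_ge_zero order_trans)
  have eA: "norm (A - A') \<le> C * \<eta> * norm (a' - a)"
    unfolding A_def A'_def C_def a'_def m_def by (intro vector_mvt_linear_error der near) auto
  have eV: "norm (V - V') \<le> C * \<eta> * norm (c - b)"
    unfolding V_def V'_def C_def m_def by (intro vector_mvt_linear_error der near) auto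
  have nA': "norm A' \<le> C * B * norm (a' - a)"
    unfolding A'_def C_def m_def by (intro norm_gradient_apply_le bound)
  have "norm V' \<le> C * B * norm (c - b)"
    unfolding V'_def C_def m_def by (intro norm_gradient_apply_le bound)
  then have nV: "norm V \<le> C * (B + \<eta>) * norm (c - b)"
    using eV norm_triangle_ineq2[of V V'] by (simp add: algebra_simps)
  have "\<bar>wedge_norm A V - wedge_norm A' V'\<bar> \<le> 2 * norm (A - A') * norm V + 2 * norm A' * norm (V - V')"
    by (rule abs_wedge_norm_diff_le)
  also have "\<dots> \<le> 2 * ((C * \<eta> * norm (a' - a)) * (C * (B + \<eta>) * norm (c - b)))
                 + 2 * ((C * B * norm (a' - a)) * (C * \<eta> * norm (c - b)))"
  proof -
    have "norm (A - A') * norm V \<le> (C * \<eta> * norm (a' - a)) * (C * (B + \<eta>) * norm (c - b))"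
      by (rule mult_mono[OF eA nV]) (use \<open>0 \<le> \<eta>\<close> in \<open>auto simp: C_def\<close>)
    moreover have "norm A' * norm (V - V') \<le> (C * B * norm (a' - a)) * (C * \<eta> * norm (c - b))"
      by (rule mult_mono[OF nA' eV]) (use \<open>0 \<le> B\<close> in \<open>auto simp: C_def\<close>)
    ultimately show ?thesis
      by linarith
  qed
  also have "\<dots> = 2 * C\<^sup>2 * (2 * B + \<eta>) * \<eta> * (norm (a' - a) * norm (c - b))"
    by (simp add: power2_eq_square algebra_simps)
  also have "\<dots> = 8 * C\<^sup>2 * (2 * B + \<eta>) * \<eta> * \<mu>"
    unfolding a'_def \<mu>_def norm_mirror_mult_norm_side[OF \<open>b \<noteq> c\<close>] by simp
  finally have "\<bar>wedge_norm A V - wedge_norm A' V'\<bar> \<le> 8 * C\<^sup>2 * (2 * B + \<eta>) * \<eta> * \<mu>" .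
  moreover have "wedge_norm A' V' = 4 * \<mu> * area_density g m"
    unfolding A'_def V'_def area_density_def wedge_norm_linear_image a'_def abs_det2_mirror_side \<mu>_def ..
  ultimately show ?thesis
    unfolding A_def V_def a'_def m_def \<mu>_def C_def by (simp add: abs_le_iff algebra_simps)
qed

section \<open>Integration over convex pieces and uniform continuity\<close>

lemma integrable_continuous_on_compact:
  fixes f :: "'a::euclidean_space \<Rightarrow> real"
  assumes "compact S" "continuous_on S f"
  shows "f integrable_on S"
proof -
  have "(\<lambda>x. indicator S x *\<^sub>R f x) integrable_on UNIV"
    by (intro integrable_on_lborel borel_integrable_compact assms)
  moreover have "(\<lambda>x. indicator S x *\<^sub>R f x) = (\<lambda>x. if x \<in> S then f x else 0)"
    by (auto simp: indicator_def)
  ultimately show ?thesis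
    by (simp add: integrable_restrict_UNIV)
qed

lemma negligible_inter_convex_closed:
  fixes S T :: "'a::euclidean_space set"
  assumes "convex S" "convex T" "closed S" "closed T" "interior S \<inter> interior T = {}"
  shows "negligible (S \<inter> T)"
proof (rule negligible_subset)
  show "negligible (frontier S \<union> frontier T)"
    using assms by (simp add: negligible_convex_frontier)
  show "S \<inter> T \<subseteq> frontier S \<union> frontier T"
    using assms by (auto simp: frontier_def closure_closed)
qed

lemma integral_UN_convex_interior_disjoint:
  fixes f :: "'a::euclidean_space \<Rightarrow> real" and T :: "'i \<Rightarrow> 'a set"
  assumes "finite I"
    and "\<And>i. i \<in> I \<Longrightarrow> convex (T i)" "\<And>i. i \<in> I \<Longrightarrow> closed (T i)"
    and "\<And>i j. i \<in> I \<Longrightarrow> j \<in> I \<Longrightarrow> i \<noteq> j \<Longrightarrow> interior (T i) \<inter> interior (T j) = {}"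
    and "\<And>i. i \<in> I \<Longrightarrow> f integrable_on T i"
  shows "integral (\<Union>i\<in>I. T i) f = (\<Sum>i\<in>I. integral (T i) f)"
proof -
  have "(f has_integral (\<Sum>i\<in>I. integral (T i) f)) (\<Union>i\<in>I. T i)"
  proof (rule has_integral_UN)
    show "pairwise (\<lambda>i j. negligible (T i \<inter> T j)) I"
    proof (rule pairwiseI)
      fix i j assume "i \<in> I" "j \<in> I" "i \<noteq> j"
      then show "negligible (T i \<inter> T j)"
        by (intro negligible_inter_convex_closed assms)
    qed
  qed (use assms in auto)
  then show ?thesis
    by (rule integral_unique)
qed

lemma abs_integral_minus_const_le:
  assumes "S \<in> lmeasurable" "f integrable_on S" "\<And>x. x \<in> S \<Longrightarrow> \<bar>f x - c\<bar> \<le> e"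
  shows "\<bar>integral S f - c * measure lebesgue S\<bar> \<le> e * measure lebesgue S"
proof -
  have const: "integral S (\<lambda>x. k) = k * measure lebesgue S" for k
    using integral_cmul[of S k "\<lambda>x. 1::real"] lmeasure_integral[OF assms(1)] by simp
  have "integral S (\<lambda>x. f x - c) = integral S f - c * measure lebesgue S"
    using assms(1,2) by (simp add: integral_diff integrable_on_const const)
  moreover have "norm (integral S (\<lambda>x. f x - c)) \<le> integral S (\<lambda>x. e)"
    using assms by (intro integral_norm_bound_integral integrable_diff integrable_on_const) auto
  ultimately show ?thesis
    by (simp add: const)
qed

lemma abs_sum_minus_integral_UN_le:
  fixes F :: "'a::euclidean_space \<Rightarrow> real" and T :: "'i \<Rightarrow> 'a set"
  assumes "finite I"
    and "\<And>i. i \<in> I \<Longrightarrow> convex (T i)" "\<And>i. i \<in> I \<Longrightarrow> compact (T i)"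
    and "\<And>i j. i \<in> I \<Longrightarrow> j \<in> I \<Longrightarrow> i \<noteq> j \<Longrightarrow> interior (T i) \<inter> interior (T j) = {}"
    and "\<And>i. i \<in> I \<Longrightarrow> F integrable_on T i"
    and err: "\<And>i. i \<in> I \<Longrightarrow> \<bar>r i - integral (T i) F\<bar> \<le> \<eta> * measure lebesgue (T i)"
  shows "\<bar>(\<Sum>i\<in>I. r i) - integral (\<Union>i\<in>I. T i) F\<bar> \<le> \<eta> * measure lebesgue (\<Union>i\<in>I. T i)"
proof -
  have lm: "T i \<in> lmeasurable" if "i \<in> I" for i
    using assms(3)[OF that] by (rule lmeasurable_compact)
  have "measure lebesgue (\<Union>i\<in>I. T i) = integral (\<Union>i\<in>I. T i) (\<lambda>x. 1)"
    using assms(1,3) by (intro lmeasure_integral lmeasurable_compact compact_UN) auto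
  also have "\<dots> = (\<Sum>i\<in>I. integral (T i) (\<lambda>x. 1))"
    using assms lm by (intro integral_UN_convex_interior_disjoint) (auto simp: compact_imp_closed integrable_on_const)
  also have "\<dots> = (\<Sum>i\<in>I. measure lebesgue (T i))"
    by (rule sum.cong[OF refl]) (metis lm lmeasure_integral)
  finally have measure_UN: "measure lebesgue (\<Union>i\<in>I. T i) = (\<Sum>i\<in>I. measure lebesgue (T i))" .
  have "\<bar>(\<Sum>i\<in>I. r i) - integral (\<Union>i\<in>I. T i) F\<bar> = \<bar>\<Sum>i\<in>I. r i - integral (T i) F\<bar>"
    using assms by (simp add: integral_UN_convex_interior_disjoint compact_imp_closed sum_subtractf)
  also have "\<dots> \<le> (\<Sum>i\<in>I. \<eta> * measure lebesgue (T i))"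
    by (intro order_trans[OF sum_abs] sum_mono err)
  finally show ?thesis
    by (simp add: measure_UN sum_distrib_left)
qed

lemma uniformly_continuous_near_compact:
  fixes f :: "'a::euclidean_space \<Rightarrow> 'b::metric_space"
  assumes "compact P" "open \<Omega>" "P \<subseteq> \<Omega>" "continuous_on \<Omega> f" "e > 0"
  obtains \<delta> where "\<delta> > 0" "\<And>x y. x \<in> P \<Longrightarrow> dist y x < \<delta> \<Longrightarrow> y \<in> \<Omega> \<and> dist (f y) (f x) < e"
proof -
  obtain r where "r > 0" and r: "(\<Union>x\<in>P. cball x r) \<subseteq> \<Omega>"
    using compact_subset_open_imp_cball_epsilon_subset[OF assms(1-3)] by blast
  define K where "K = {x + y | x y. x \<in> P \<and> y \<in> cball 0 r}"
  have K_eq: "K = (\<Union>x\<in>P. cball x r)"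
  proof (intro equalityI subsetI)
    fix z assume "z \<in> K"
    then obtain x y where "z = x + y" "x \<in> P" "norm y \<le> r"
      by (auto simp: K_def)
    then show "z \<in> (\<Union>x\<in>P. cball x r)"
      by (intro UN_I[of x]) (auto simp: dist_norm)
  next
    fix z assume "z \<in> (\<Union>x\<in>P. cball x r)"
    then obtain x where "x \<in> P" "dist x z \<le> r"
      by auto
    then show "z \<in> K"
      unfolding K_def by (intro CollectI exI[of _ x] exI[of _ "z - x"]) (auto simp: dist_norm)
  qed
  have "compact K"
    unfolding K_def by (intro compact_sums assms(1) compact_cball)
  then have "uniformly_continuous_on K f"
    using r K_eq by (intro compact_uniformly_continuous continuous_on_subset[OF assms(4)]) auto
  then obtain d where "d > 0" and d: "\<And>x y. x \<in> K \<Longrightarrow> y \<in> K \<Longrightarrow> dist y x < d \<Longrightarrow> dist (f y) (f x) < e"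
    using assms(5) unfolding uniformly_continuous_on_def by metis
  show ?thesis
  proof
    show "min d r > 0"
      using \<open>d > 0\<close> \<open>r > 0\<close> by simp
    fix x y assume "x \<in> P" "dist y x < min d r"
    then have "x \<in> K" "y \<in> K"
      using \<open>r > 0\<close> by (auto simp: K_eq dist_commute intro!: bexI[of _ x])
    moreover have "dist y x < d"
      using \<open>dist y x < min d r\<close> by simp
    ultimately show "y \<in> \<Omega> \<and> dist (f y) (f x) < e"
      using d r K_eq by blast
  qed
qed

lemma quarter_wedge_mirror_minus_integral:
  fixes s :: "real^2 \<Rightarrow> real^'n" and g :: "'n \<Rightarrow> real^2 \<Rightarrow> real^2"
  assumes "b \<noteq> c"
    and der: "\<And>j x. x \<in> triangle a b c \<union> closed_segment a (mirror a b c) \<Longrightarrow>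
                ((\<lambda>y. s y $ j) has_derivative (\<lambda>h. g j x \<bullet> h)) (at x)"
    and near: "\<And>j x. x \<in> triangle a b c \<union> closed_segment a (mirror a b c) \<Longrightarrow>
                norm (g j x - g j (foot a b c)) \<le> \<eta>"
    and bound: "\<And>j. norm (g j (foot a b c)) \<le> B" and "0 \<le> \<eta>"
    and near_density: "\<And>x. x \<in> triangle a b c \<Longrightarrow>
                \<bar>area_density g x - area_density g (foot a b c)\<bar> \<le> e"
    and integrable: "area_density g integrable_on triangle a b c"
  shows "\<bar>(1/4) * wedge_norm (s (mirror a b c) - s a) (s c - s b)
            - integral (triangle a b c) (area_density g)\<bar>
         \<le> (2 * (real CARD('n))\<^sup>2 * (2 * B + \<eta>) * \<eta> + e) * measure lebesgue (triangle a b c)"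
proof -
  define \<mu> N where "\<mu> = measure lebesgue (triangle a b c)" and "N = area_density g (foot a b c)"
  have chords: "closed_segment a (mirror a b c) \<union> closed_segment b c
                  \<subseteq> triangle a b c \<union> closed_segment a (mirror a b c)"
    using closed_segment_subset_triangle by blast
  have "\<bar>(1/4) * wedge_norm (s (mirror a b c) - s a) (s c - s b) - \<mu> * N\<bar>
          \<le> 2 * (real CARD('n))\<^sup>2 * (2 * B + \<eta>) * \<eta> * \<mu>"
    unfolding \<mu>_def N_def
    by (rule quarter_wedge_mirror_linearization[where g = g and B = B])
       (use assms(1) bound \<open>0 \<le> \<eta>\<close> chords der near in blast)+
  moreover have "\<bar>integral (triangle a b c) (area_density g) - N * \<mu>\<bar> \<le> e * \<mu>"
    unfolding \<mu>_def N_def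
    by (intro abs_integral_minus_const_le integrable near_density lmeasurable_compact)
       (simp add: triangle_def finite_imp_compact_convex_hull)
  moreover have "\<mu> * N = N * \<mu>"
    by (rule mult.commute)
  ultimately show ?thesis
    unfolding \<mu>_def[symmetric] distrib_right by linarith
qed

lemma balanced_triangle_error_uniform:
  fixes s :: "real^2 \<Rightarrow> real^'n" and g :: "'n \<Rightarrow> real^2 \<Rightarrow> real^2"
  assumes "compact P" "open \<Omega>" "P \<subseteq> \<Omega>"
    and der: "\<And>j x. x \<in> \<Omega> \<Longrightarrow> ((\<lambda>y. s y $ j) has_derivative (\<lambda>h. g j x \<bullet> h)) (at x)"
    and cont: "\<And>j. continuous_on \<Omega> (g j)"
    and "\<eta> > 0"
  obtains \<delta> where "\<delta> > 0"
    and "\<And>a b c. triangle a b c \<subseteq> P \<Longrightarrow> b \<noteq> c \<Longrightarrow> balanced_mirror a b c \<Longrightarrow>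
           max (dist a b) (max (dist b c) (dist c a)) < \<delta> \<Longrightarrow>
           \<bar>(1/4) * wedge_norm (s (mirror a b c) - s a) (s c - s b)
              - integral (triangle a b c) (area_density g)\<bar>
           \<le> \<eta> * measure lebesgue (triangle a b c)"
proof -
  define G where "G x = (\<chi> j. g j x)" for x
  have G: "continuous_on \<Omega> G"
    unfolding G_def by (intro continuous_on_vec_lambda cont)
  have density: "continuous_on \<Omega> (area_density g)"
    using cont by (rule continuous_on_area_density)
  have "bounded (G ` P)"
    by (intro compact_imp_bounded compact_continuous_image continuous_on_subset[OF G] assms)
  then obtain B where "B > 0" and B: "\<And>x. x \<in> P \<Longrightarrow> norm (G x) \<le> B"
    by (auto simp: bounded_pos)
  define L where "L = 2 * (real CARD('n))\<^sup>2 * (2 * B + 1)"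
  define \<theta> where "\<theta> = min 1 (\<eta> / (2 * (L + 1)))"
  have "0 \<le> L"
    using \<open>B > 0\<close> by (simp add: L_def)
  have "0 < \<theta>" "\<theta> \<le> 1" "\<theta> \<le> \<eta> / (2 * (L + 1))"
    using \<open>\<eta> > 0\<close> \<open>0 \<le> L\<close> by (simp_all add: \<theta>_def)
  have "2 * (real CARD('n))\<^sup>2 * (2 * B + \<theta>) * \<theta> \<le> L * \<theta>"
    unfolding L_def using \<open>0 < \<theta>\<close> \<open>\<theta> \<le> 1\<close> by (intro mult_right_mono mult_left_mono) auto
  also have "\<dots> \<le> (L + 1) * \<theta>"
    using \<open>0 < \<theta>\<close> by (simp add: distrib_right)
  also have "\<dots> \<le> \<eta> / 2"
    using \<open>\<theta> \<le> \<eta> / (2 * (L + 1))\<close> \<open>0 \<le> L\<close> by (simp add: field_simps)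
  finally have linearization_error: "2 * (real CARD('n))\<^sup>2 * (2 * B + \<theta>) * \<theta> \<le> \<eta> / 2" .
  obtain \<delta>1 where "\<delta>1 > 0"
    and \<delta>1: "\<And>x y. x \<in> P \<Longrightarrow> dist y x < \<delta>1 \<Longrightarrow> y \<in> \<Omega> \<and> dist (G y) (G x) < \<theta>"
    by (rule uniformly_continuous_near_compact[OF assms(1-3) G \<open>0 < \<theta>\<close>]) blast
  obtain \<delta>2 where "\<delta>2 > 0"
    and \<delta>2: "\<And>x y. x \<in> P \<Longrightarrow> dist y x < \<delta>2 \<Longrightarrow> dist (area_density g y) (area_density g x) < \<eta> / 2"
    by (rule uniformly_continuous_near_compact[OF assms(1-3) density half_gt_zero[OF \<open>\<eta> > 0\<close>]]) blast
  show ?thesis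
  proof (rule that[of "min \<delta>1 \<delta>2"])
    show "min \<delta>1 \<delta>2 > 0"
      using \<open>\<delta>1 > 0\<close> \<open>\<delta>2 > 0\<close> by simp
    fix a b c
    assume T: "triangle a b c \<subseteq> P" "b \<noteq> c" "balanced_mirror a b c"
      and sides: "max (dist a b) (max (dist b c) (dist c a)) < min \<delta>1 \<delta>2"
    define m where "m = foot a b c"
    have "m \<in> P"
      using foot_in_closed_segment[OF T(3)] closed_segment_subset_triangle T(1) unfolding m_def by blast
    have close: "dist y m < \<delta>1" "dist y m < \<delta>2"
      if "y \<in> triangle a b c \<union> closed_segment a (mirror a b c)" for y
      using balanced_triangle_near_foot[OF T(3) sides that] by (simp_all add: m_def)
    have "\<bar>(1/4) * wedge_norm (s (mirror a b c) - s a) (s c - s b)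
            - integral (triangle a b c) (area_density g)\<bar>
          \<le> (2 * (real CARD('n))\<^sup>2 * (2 * B + \<theta>) * \<theta> + \<eta> / 2) * measure lebesgue (triangle a b c)"
    proof (rule quarter_wedge_mirror_minus_integral[OF T(2)])
      fix j y assume y: "y \<in> triangle a b c \<union> closed_segment a (mirror a b c)"
      show "((\<lambda>y. s y $ j) has_derivative (\<lambda>h. g j y \<bullet> h)) (at y)"
        using \<delta>1[OF \<open>m \<in> P\<close> close(1)[OF y]] der by blast
    next
      fix j y assume y: "y \<in> triangle a b c \<union> closed_segment a (mirror a b c)"
      have "norm (g j y - g j m) \<le> dist (G y) (G m)"
        using Finite_Cartesian_Product.norm_nth_le[of "G y - G m" j] by (simp add: G_def dist_norm)
      then show "norm (g j y - g j (foot a b c)) \<le> \<theta>"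
        using \<delta>1[OF \<open>m \<in> P\<close> close(1)[OF y]] by (simp add: m_def)
    next
      fix j
      show "norm (g j (foot a b c)) \<le> B"
        using Finite_Cartesian_Product.norm_nth_le[of "G m" j] B[OF \<open>m \<in> P\<close>] by (simp add: G_def m_def)
    next
      fix y assume "y \<in> triangle a b c"
      then have "dist (area_density g y) (area_density g m) < \<eta> / 2"
        using \<delta>2[OF \<open>m \<in> P\<close> close(2)] by blast
      then show "\<bar>area_density g y - area_density g (foot a b c)\<bar> \<le> \<eta> / 2"
        by (simp add: m_def dist_real_def)
    next
      show "area_density g integrable_on triangle a b c"
        using T(1) assms(3)
        by (intro integrable_continuous_on_compact continuous_on_subset[OF density])
           (auto simp: triangle_def finite_imp_compact_convex_hull)
    next
      show "0 \<le> \<theta>"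
        using \<open>0 < \<theta>\<close> by simp
    qed
    also have "\<dots> \<le> \<eta> * measure lebesgue (triangle a b c)"
      using linearization_error by (intro mult_right_mono) simp_all
    finally show "\<bar>(1/4) * wedge_norm (s (mirror a b c) - s a) (s c - s b)
            - integral (triangle a b c) (area_density g)\<bar> \<le> \<eta> * measure lebesgue (triangle a b c)" .
  qed
qed

lemma smooth_surface_continuous_gradient:
  assumes "smooth_surface \<Omega> s"
  obtains g where "\<And>j x. x \<in> \<Omega> \<Longrightarrow> ((\<lambda>y. s y $ j) has_derivative (\<lambda>h. g j x \<bullet> h)) (at x)"
    and "\<And>j. continuous_on \<Omega> (g j)"
proof -
  have "\<exists>gj. \<forall>x\<in>\<Omega>. ((\<lambda>y. s y $ j) has_derivative (\<lambda>h. gj x \<bullet> h)) (at x) \<and> isCont gj x" for j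
  proof -
    obtain gj H where "\<forall>x\<in>\<Omega>. ((\<lambda>y. s y $ j) has_derivative (\<lambda>h. gj x \<bullet> h)) (at x) \<and>
                              (gj has_derivative (\<lambda>h. H x *v h)) (at x)"
      using assms unfolding smooth_surface_def smooth_fun_def by blast
    then show ?thesis
      by (blast intro: has_derivative_continuous)
  qed
  then obtain g where "\<forall>j. \<forall>x\<in>\<Omega>. ((\<lambda>y. s y $ j) has_derivative (\<lambda>h. g j x \<bullet> h)) (at x) \<and> isCont (g j) x"
    by metis
  then show ?thesis
    by (intro that) (auto intro: continuous_at_imp_continuous_on)
qed

lemma wedge_norm_partial_dir_orthonormal:
  fixes s :: "real^2 \<Rightarrow> real^'n"
  assumes "\<And>j. ((\<lambda>y. s y $ j) has_derivative (\<lambda>h. g j x \<bullet> h)) (at x)"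
    and "norm l1 = 1" "norm l2 = 1" "l1 \<bullet> l2 = 0"
  shows "wedge_norm (partial_dir s l1 x) (partial_dir s l2 x) = area_density g x"
proof -
  have "partial_dir s l x = (\<chi> j. g j x \<bullet> l)" for l
    unfolding partial_dir_def by (simp add: frechet_derivative_at[OF assms(1), symmetric])
  moreover have "\<bar>det2 l1 l2\<bar> = 1"
    using abs_det2_orthogonal[OF assms(4)] assms(2,3) by simp
  ultimately show ?thesis
    unfolding area_density_def by (simp add: wedge_norm_linear_image)
qed

lemma compact_polygon_imp_compact:
  assumes "compact_polygon P"
  shows "compact P"
proof -
  obtain vs where "simple_path (polypath vs)"
    and P: "P = path_image (polypath vs) \<union> inside (path_image (polypath vs))"
    using assms unfolding compact_polygon_def by blast
  then have "path (polypath vs)"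
    by (simp add: simple_path_imp_path)
  then show ?thesis
    unfolding P compact_eq_bounded_closed
    by (auto intro: closed_path_image_Un_inside bounded_inside bounded_path_image)
qed

lemma admissible_partition_triangle:
  assumes "admissible_partition \<Omega> P Pt" "(a, b, c) \<in> Pt"
  shows "triangle a b c \<subseteq> P" "b \<noteq> c" "balanced_mirror a b c"
    and "max (dist a b) (max (dist b c) (dist c a)) \<le> mesh Pt"
proof -
  have "finite Pt" and cover: "\<Union>(tri ` Pt) = P"
    and props: "\<forall>(a, b, c)\<in>Pt. nondegenerate a b c \<and> balanced_at_a \<Omega> a b c"
    using assms(1) unfolding admissible_partition_def by blast+
  show "triangle a b c \<subseteq> P"
    using cover assms(2) by (auto simp: tri_def)
  have "\<not> collinear {a, b, c}" "balanced_at_a \<Omega> a b c"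
    using bspec[OF props assms(2)] by (simp_all add: nondegenerate_def)
  then show "b \<noteq> c" "balanced_mirror a b c"
    by (auto simp: collinear_2 balanced_at_a_def)
  have "max (dist a b) (max (dist b c) (dist c a))
          \<in> (\<lambda>(a, b, c). max (dist a b) (max (dist b c) (dist c a))) ` Pt"
    by (rule image_eqI[OF _ assms(2)]) simp
  then show "max (dist a b) (max (dist b c) (dist c a)) \<le> mesh Pt"
    unfolding mesh_def using \<open>finite Pt\<close> by (intro Max_ge) auto
qed

lemma convex_tri: "convex (tri t)"
  by (cases t) (simp add: tri_def triangle_def)

lemma compact_tri: "compact (tri t)"
  by (cases t) (simp add: tri_def triangle_def finite_imp_compact_convex_hull)

lemma abs_partition_sum_minus_integral_le:
  fixes F :: "real^2 \<Rightarrow> real" and r :: "(real^2) \<times> (real^2) \<times> (real^2) \<Rightarrow> real"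
  assumes "admissible_partition \<Omega> P Pt" "P \<subseteq> \<Omega>" "continuous_on \<Omega> F"
    and err: "\<And>a b c. (a, b, c) \<in> Pt \<Longrightarrow>
                \<bar>r (a, b, c) - integral (triangle a b c) F\<bar> \<le> \<eta> * measure lebesgue (triangle a b c)"
  shows "\<bar>(\<Sum>t\<in>Pt. r t) - integral P F\<bar> \<le> \<eta> * measure lebesgue P"
proof -
  have "finite Pt" and P_eq: "(\<Union>t\<in>Pt. tri t) = P"
    and disjoint: "\<And>t t'. t \<in> Pt \<Longrightarrow> t' \<in> Pt \<Longrightarrow> t \<noteq> t' \<Longrightarrow> interior (tri t) \<inter> interior (tri t') = {}"
    using assms(1) unfolding admissible_partition_def by auto
  have "\<bar>(\<Sum>t\<in>Pt. r t) - integral (\<Union>t\<in>Pt. tri t) F\<bar> \<le> \<eta> * measure lebesgue (\<Union>t\<in>Pt. tri t)"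
  proof (rule abs_sum_minus_integral_UN_le[OF \<open>finite Pt\<close> convex_tri compact_tri disjoint])
    fix t assume "t \<in> Pt"
    moreover obtain a b c where t: "t = (a, b, c)"
      by (cases t) auto
    ultimately have abc: "(a, b, c) \<in> Pt"
      by simp
    show "F integrable_on tri t"
      using admissible_partition_triangle(1)[OF assms(1) abc] assms(2)
      by (intro integrable_continuous_on_compact compact_tri continuous_on_subset[OF assms(3)])
         (auto simp: t tri_def)
    show "\<bar>r t - integral (tri t) F\<bar> \<le> \<eta> * measure lebesgue (tri t)"
      using err[OF abc] by (simp add: t tri_def)
  qed
  then show ?thesis
    unfolding P_eq .
qed

lemma mirror_sum_tendsto_area_integral:
  fixes s :: "real^2 \<Rightarrow> real^'n" and g :: "'n \<Rightarrow> real^2 \<Rightarrow> real^2"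
  assumes "compact P" "open \<Omega>" "P \<subseteq> \<Omega>"
    and der: "\<And>j x. x \<in> \<Omega> \<Longrightarrow> ((\<lambda>y. s y $ j) has_derivative (\<lambda>h. g j x \<bullet> h)) (at x)"
    and cont: "\<And>j. continuous_on \<Omega> (g j)"
    and "\<epsilon> > 0"
  shows "\<exists>\<delta>>0. \<forall>Pt. admissible_partition \<Omega> P Pt \<and> mesh Pt < \<delta> \<longrightarrow>
           \<bar>(1/4) * (\<Sum>(a,b,c)\<in>Pt. wedge_norm (s (mirror a b c) - s a) (s c - s b))
             - integral P (area_density g)\<bar> < \<epsilon>"
proof -
  define \<eta> where "\<eta> = \<epsilon> / (measure lebesgue P + 1)"
  have "0 < measure lebesgue P + 1"
    using measure_nonneg[of lebesgue P] by linarith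
  then have "\<eta> > 0" "\<eta> * measure lebesgue P < \<epsilon>"
    using \<open>\<epsilon> > 0\<close> by (simp_all add: \<eta>_def field_simps)
  obtain \<delta> where "\<delta> > 0" and \<delta>: "\<And>a b c. triangle a b c \<subseteq> P \<Longrightarrow> b \<noteq> c \<Longrightarrow> balanced_mirror a b c \<Longrightarrow>
      max (dist a b) (max (dist b c) (dist c a)) < \<delta> \<Longrightarrow>
      \<bar>(1/4) * wedge_norm (s (mirror a b c) - s a) (s c - s b) - integral (triangle a b c) (area_density g)\<bar>
        \<le> \<eta> * measure lebesgue (triangle a b c)"
    using balanced_triangle_error_uniform[OF assms(1-3) der cont \<open>\<eta> > 0\<close>] by blast
  have "\<bar>(1/4) * (\<Sum>(a,b,c)\<in>Pt. wedge_norm (s (mirror a b c) - s a) (s c - s b))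
          - integral P (area_density g)\<bar> \<le> \<eta> * measure lebesgue P"
    if Pt: "admissible_partition \<Omega> P Pt" "mesh Pt < \<delta>" for Pt
    unfolding sum_distrib_left
  proof (rule abs_partition_sum_minus_integral_le[OF Pt(1) assms(3) continuous_on_area_density[OF cont]])
    fix a b c assume "(a, b, c) \<in> Pt"
    with Pt show "\<bar>(1/4) * (case (a, b, c) of (a, b, c) \<Rightarrow> wedge_norm (s (mirror a b c) - s a) (s c - s b))
                    - integral (triangle a b c) (area_density g)\<bar> \<le> \<eta> * measure lebesgue (triangle a b c)"
      using \<delta> admissible_partition_triangle[of \<Omega> P Pt a b c] by simp
  qed
  then show ?thesis
    using \<open>\<delta> > 0\<close> \<open>\<eta> * measure lebesgue P < \<epsilon>\<close> by force
qed

theorem theorem3: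
  fixes \<Omega> P :: "(real^2) set" and s :: "real^2 \<Rightarrow> real^'n" and l1 l2 :: "real^2"
  assumes "open \<Omega>" and "compact_polygon P" and "P \<subseteq> \<Omega>"
    and "smooth_surface \<Omega> s"
    and "norm l1 = 1" and "norm l2 = 1" and "l1 \<bullet> l2 = 0"
  shows "\<forall>\<epsilon>>0. \<exists>\<delta>>0. \<forall>Pt. admissible_partition \<Omega> P Pt \<and> mesh Pt < \<delta> \<longrightarrow>
           \<bar>(1/4) * (\<Sum>(a,b,c)\<in>Pt. wedge_norm (s (mirror a b c) - s a) (s c - s b))
             - integral P (\<lambda>x. wedge_norm (partial_dir s l1 x) (partial_dir s l2 x))\<bar> < \<epsilon>"
proof -
  obtain g where der: "\<And>j x. x \<in> \<Omega> \<Longrightarrow> ((\<lambda>y. s y $ j) has_derivative (\<lambda>h. g j x \<bullet> h)) (at x)"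
    and cont: "\<And>j. continuous_on \<Omega> (g j)"
    using smooth_surface_continuous_gradient[OF assms(4)] by blast
  have "integral P (\<lambda>x. wedge_norm (partial_dir s l1 x) (partial_dir s l2 x)) = integral P (area_density g)"
    using assms(3,5-7) der by (intro integral_cong wedge_norm_partial_dir_orthonormal) auto
  moreover have "compact P"
    using assms(2) by (rule compact_polygon_imp_compact)
  ultimately show ?thesis
    using mirror_sum_tendsto_area_integral[OF _ assms(1,3) der cont] by simp
qed

end
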